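(* Let $N\ge3$, $h=1/N$, $\tau>0$, $\eta>0$, $\sigma\in\mathbb{R}$, $k\in\{2,3,4\}$, and let $\mathbf{X}^{m-p}=(x^{m-p},y^{m-p})^T\in\mathbb{X}^h$, $p=0,\dots,k-1$, be given. Let $\widetilde{\mathbf{X}}^{m+1}\in\mathbb{X}^h$ be the predicted curve (generated by the BDF$(k-1)$-ZJB scheme), with edges $\widetilde{\mathbf{h}}^{m+1}_j=\widetilde{\mathbf{X}}^{m+1}(\rho_j)-\widetilde{\mathbf{X}}^{m+1}(\rho_{j-1})$ and unit normals $\widetilde{\mathbf{n}}^{m+1}_j=(\widetilde n^{m+1}_{j,1},\widetilde n^{m+1}_{j,2})^T$ on $I_j$, $j=1,\dots,N$. Assume (i) $(\widetilde n^{m+1}_{1,1})^2+(\widetilde n^{m+1}_{N,1})^2>0$, and (ii) $\min_{1\le j\le N}|\widetilde{\mathbf{h}}^{m+1}_j|>0$. Then the linear system (BDF$k$-ZJB scheme): find $\mathbf{X}^{m+1}=(x^{m+1},y^{m+1})^T\in\mathbb{X}^h$ and $\kappa^{m+1}\in\mathbb{K}^h$ such that $$\Big\langle\tfrac{a\mathbf{X}^{m+1}-\widehat{\mathbf{X}}^m}{\tau},\widetilde{\mathbf{n}}^{m+1}\psi^h\Big\rangle^h_{\widetilde\Gamma^{m+1}}+\langle\partial_s\kappa^{m+1},\partial_s\psi^h\rangle_{\widetilde\Gamma^{m+1}}=0\quad\forall\psi^h\in\mathbb{K}^h,$$ $$\langle\kappa^{m+1}\widetilde{\mathbf{n}}^{m+1},\boldsymbol\omega^h\rangle^h_{\widetilde\Gamma^{m+1}}-\langle\partial_s\mathbf{X}^{m+1},\partial_s\boldsymbol\omega^h\rangle_{\widetilde\Gamma^{m+1}}+\sigma[\omega^h_1(1)-\omega^h_1(0)]$$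 $$-\frac1{\eta\tau}\Big[\big(a\,x^{m+1}(0)-\widehat x^m(0)\big)\omega^h_1(0)+\big(a\,x^{m+1}(1)-\widehat x^m(1)\big)\omega^h_1(1)\Big]=0\quad\forall\boldsymbol\omega^h=(\omega^h_1,\omega^h_2)^T\in\mathbb{X}^h,$$ is well-posed, i.e., it has a unique solution $(\mathbf{X}^{m+1},\kappa^{m+1})\in\mathbb{X}^h\times\mathbb{K}^h$.
   Context: Mesh: $\rho_j=jh$, $I_j=[\rho_{j-1},\rho_j]$. $\mathbb{K}^h$ = continuous functions on $[0,1]$ affine on each $I_j$; $\mathbb{K}^h_0=\{\psi\in\mathbb{K}^h:\psi(0)=\psi(1)=0\}$; $\mathbb{X}^h=\mathbb{K}^h\times\mathbb{K}^h_0$. For $\mathbf{Y}\in\mathbb{X}^h$ with edges $\mathbf{h}_j=\mathbf{Y}(\rho_j)-\mathbf{Y}(\rho_{j-1})\ne0$: normal on $I_j$ is $\big(-(\mathbf{h}_j)_2,(\mathbf{h}_j)_1\big)^T/|\mathbf{h}_j|$; $\partial_sf|_{I_j}=h\partial_\rho f|_{I_j}/|\mathbf{h}_j|$; $\langle u,v\rangle_{\mathbf{Y}}=\int_0^1u\cdot v|\partial_\rho\mathbf{Y}|d\rho$; $\langle u,v\rangle^h_{\mathbf{Y}}=\frac12\sum_{j=1}^N|\mathbf{h}_j|[(u\cdot v)(\rho_j^-)+(u\cdot v)(\rho_{j-1}^+)]$. $\widetilde\Gamma^{m+1}$ denotes the curve $\widetilde{\mathbf{X}}^{m+1}$, with respect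 to which normals, $\partial_s$ and inner products are taken. Coefficients: BDF2: $a=\frac32$, $\widehat{\mathbf{X}}^m=2\mathbf{X}^m-\frac12\mathbf{X}^{m-1}$; BDF3: $a=\frac{11}6$, $\widehat{\mathbf{X}}^m=3\mathbf{X}^m-\frac32\mathbf{X}^{m-1}+\frac13\mathbf{X}^{m-2}$; BDF4: $a=\frac{25}{12}$, $\widehat{\mathbf{X}}^m=4\mathbf{X}^m-3\mathbf{X}^{m-1}+\frac43\mathbf{X}^{m-2}-\frac14\mathbf{X}^{m-3}$; $\widehat x^m$ is the first component of $\widehat{\mathbf{X}}^m$. The BDF1-ZJB scheme is the ZJB (backward Euler) scheme, in which normals, $\partial_s$ and inner products are taken on the previous curve $\mathbf{X}^m$ and $a=1$, $\widehat{\mathbf{X}}^m=\mathbf{X}^m$; the BDF$j$-ZJB scheme uses as predicted curve the output of the BDF$(j-1)$-ZJB scheme. *)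

theory Defs
  imports Complex_Main
begin

text \<open>Piecewise-linear finite element functions on the uniform mesh
 rho_j = j h, h = 1/N, are represented by their nodal values at j = 0..N
 (a function in K^h is uniquely determined by these; values at j > N are
 normalised to 0).\<close>

definition mesh_h :: "nat \<Rightarrow> real" where
  "mesh_h N = 1 / real N"

definition Kh :: "nat \<Rightarrow> (nat \<Rightarrow> real) set" where
  "Kh N = {f. \<forall>j>N. f j = 0}"

definition Kh0 :: "nat \<Rightarrow> (nat \<Rightarrow> real) set" where
  "Kh0 N = {f \<in> Kh N. f 0 = 0 \<and> f N = 0}"

definition Xh :: "nat \<Rightarrow> (nat \<Rightarrow> real \<times> real) set" where
  "Xh N = {X. (\<lambda>j. fst (X j)) \<in> Kh N \<and> (\<lambda>j. snd (X j)) \<in> Kh0 N}"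

definition edge1 :: "(nat \<Rightarrow> real \<times> real) \<Rightarrow> nat \<Rightarrow> real" where
  "edge1 Y j = fst (Y j) - fst (Y (j - 1))"
definition edge2 :: "(nat \<Rightarrow> real \<times> real) \<Rightarrow> nat \<Rightarrow> real" where
  "edge2 Y j = snd (Y j) - snd (Y (j - 1))"
definition elen :: "(nat \<Rightarrow> real \<times> real) \<Rightarrow> nat \<Rightarrow> real" where
  "elen Y j = sqrt ((edge1 Y j)\<^sup>2 + (edge2 Y j)\<^sup>2)"
definition nrm1 :: "(nat \<Rightarrow> real \<times> real) \<Rightarrow> nat \<Rightarrow> real" where
  "nrm1 Y j = - edge2 Y j / elen Y j"
definition nrm2 :: "(nat \<Rightarrow> real \<times> real) \<Rightarrow> nat \<Rightarrow> real" where
  "nrm2 Y j = edge1 Y j / elen Y j"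

definition drho :: "nat \<Rightarrow> (nat \<Rightarrow> real) \<Rightarrow> nat \<Rightarrow> real" where
  "drho N f j = (f j - f (j - 1)) / mesh_h N"
definition ds :: "nat \<Rightarrow> (nat \<Rightarrow> real \<times> real) \<Rightarrow> (nat \<Rightarrow> real) \<Rightarrow> nat \<Rightarrow> real" where
  "ds N Y f j = mesh_h N * drho N f j / elen Y j"

text \<open>L2 inner product <u,v>_Y = int_0^1 u v |partial_rho Y| drho for functions
 u, v that are constant on each I_j (given by their values u j, v j on I_j);
 on I_j, |partial_rho Y| = |h_j|/h, so the integral over I_j is h * u_j v_j * |h_j|/h.\<close>
definition ip_pc :: "nat \<Rightarrow> (nat \<Rightarrow> real \<times> real) \<Rightarrow> (nat \<Rightarrow> real) \<Rightarrow> (nat \<Rightarrow> real) \<Rightarrow> real" where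
  "ip_pc N Y u v = (\<Sum>j=1..N. mesh_h N * (u j * v j) * sqrt ((drho N (\<lambda>i. fst (Y i)) j)\<^sup>2 + (drho N (\<lambda>i. snd (Y i)) j)\<^sup>2))"

text \<open>Mass-lumped inner product: w j i is the value of (u . v) at node rho_i
 computed from the restriction to I_j (i.e. w j j = (u.v)(rho_j^-),
 w j (j-1) = (u.v)(rho_(j-1)^+)).\<close>
definition ip_lump :: "nat \<Rightarrow> (nat \<Rightarrow> real \<times> real) \<Rightarrow> (nat \<Rightarrow> nat \<Rightarrow> real) \<Rightarrow> real" where
  "ip_lump N Y w = (1/2) * (\<Sum>j=1..N. elen Y j * (w j j + w j (j - 1)))"

text \<open>BDF coefficients: a and the extrapolated curve hat X^m built from
 Xs p = X^(m-p).\<close>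
definition bdf_a :: "nat \<Rightarrow> real" where
  "bdf_a k = (if k = 2 then 3/2 else if k = 3 then 11/6 else 25/12)"

definition bdf_hat :: "nat \<Rightarrow> (nat \<Rightarrow> nat \<Rightarrow> real \<times> real) \<Rightarrow> nat \<Rightarrow> real \<times> real" where
  "bdf_hat k Xs j =
    (if k = 2 then (2 * fst (Xs 0 j) - 1/2 * fst (Xs 1 j),
                    2 * snd (Xs 0 j) - 1/2 * snd (Xs 1 j))
     else if k = 3 then (3 * fst (Xs 0 j) - 3/2 * fst (Xs 1 j) + 1/3 * fst (Xs 2 j),
                         3 * snd (Xs 0 j) - 3/2 * snd (Xs 1 j) + 1/3 * snd (Xs 2 j))
     else (4 * fst (Xs 0 j) - 3 * fst (Xs 1 j) + 4/3 * fst (Xs 2 j) - 1/4 * fst (Xs 3 j),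
           4 * snd (Xs 0 j) - 3 * snd (Xs 1 j) + 4/3 * snd (Xs 2 j) - 1/4 * snd (Xs 3 j)))"

definition bdf_zjb_eqs ::
  "nat \<Rightarrow> nat \<Rightarrow> real \<Rightarrow> real \<Rightarrow> real \<Rightarrow> (nat \<Rightarrow> nat \<Rightarrow> real \<times> real) \<Rightarrow>
   (nat \<Rightarrow> real \<times> real) \<Rightarrow> (nat \<Rightarrow> real \<times> real) \<Rightarrow> (nat \<Rightarrow> real) \<Rightarrow> bool" where
  "bdf_zjb_eqs N k tau eta sigma Xs Xt X kappa \<longleftrightarrow>
    (let a = bdf_a k; Xhat = bdf_hat k Xs;
         V1 = (\<lambda>i. (a * fst (X i) - fst (Xhat i)) / tau);
         V2 = (\<lambda>i. (a * snd (X i) - snd (Xhat i)) / tau)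
     in
     (\<forall>psi \<in> Kh N.
        ip_lump N Xt (\<lambda>j i. (V1 i * nrm1 Xt j + V2 i * nrm2 Xt j) * psi i)
        + ip_pc N Xt (ds N Xt kappa) (ds N Xt psi) = 0)
   \<and> (\<forall>om \<in> Xh N.
        ip_lump N Xt (\<lambda>j i. kappa i * (nrm1 Xt j * fst (om i) + nrm2 Xt j * snd (om i)))
        - (ip_pc N Xt (ds N Xt (\<lambda>i. fst (X i))) (ds N Xt (\<lambda>i. fst (om i)))
           + ip_pc N Xt (ds N Xt (\<lambda>i. snd (X i))) (ds N Xt (\<lambda>i. snd (om i))))
        + sigma * (fst (om N) - fst (om 0))
        - 1 / (eta * tau) * ((a * fst (X 0) - fst (Xhat 0)) * fst (om 0)
                            + (a * fst (X N) - fst (Xhat N)) * fst (om N)) = 0))"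

end

theory Submission
  imports Defs "HOL-Library.Function_Algebras" "HOL-Analysis.Product_Vector"
begin

text \<open>The scheme is linear in the unknown u = (X, \<kappa>), and its trial and test spaces coincide
  (both are X^h \<times> K^h). Written as B(u, v) = l(v) for all test pairs v = (\<omega>, \<psi>), it is a
  square finite-dimensional linear system, so existence follows from uniqueness, and it suffices
  that B(u, v) = 0 for all v forces u = 0. Testing with v = (0, \<kappa>) and v = (X, 0) gives
  (a/\<tau>) M + |d_s \<kappa>|^2 = 0 and M = |d_s X|^2 + a/(\<eta>\<tau>) (x(0)^2 + x(1)^2),
  where M = <\<kappa> n, X>^h. Hence every term vanishes: \<kappa> and X are constant along the curve,
  x(0) = 0 and y(0) = 0, so X = 0. Testing finally with the hat functions of the two end nodes in
  the first component leaves \<kappa> n_1 |h| = 0 on the first and on the last edge, and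
  assumption (i) forces \<kappa> = 0.\<close>

instantiation "fun" :: (type, real_vector) real_vector
begin

definition scaleR_fun :: "real \<Rightarrow> ('a \<Rightarrow> 'b) \<Rightarrow> 'a \<Rightarrow> 'b" where
  "scaleR_fun c f = (\<lambda>x. c *\<^sub>R f x)"

instance
  by standard (simp_all add: scaleR_fun_def fun_eq_iff scaleR_add_right scaleR_add_left)

end

lemma scaleR_fun_apply [simp]: "(c *\<^sub>R f) x = c *\<^sub>R f x"
  by (simp add: scaleR_fun_def)

lemma sum_fun_apply: "(\<Sum>i\<in>A. f i) x = (\<Sum>i\<in>A. f i x)"
  by (induction A rule: infinite_finite_induct) auto

lemma linear_inj_on_imp_surj_on_span:
  assumes lin: "linear f" and "finite B" and ind: "independent B"
    and into: "f ` span B \<subseteq> span B" and inj: "inj_on f (span B)"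
  shows "f ` span B = span B"
proof -
  have ind_image: "independent (f ` B)"
    by (rule linear_independent_injective_image[OF lin ind inj])
  have card_image: "card (f ` B) = card B"
    using card_image inj_on_subset[OF inj span_superset] by blast
  have "span B \<subseteq> span (f ` B)"
  proof
    fix y assume y: "y \<in> span B"
    show "y \<in> span (f ` B)"
    proof (rule ccontr)
      assume "y \<notin> span (f ` B)"
      then have "independent (insert y (f ` B))" and "y \<notin> f ` B"
        using independent_insertI[OF _ ind_image] span_superset by blast+
      moreover have "insert y (f ` B) \<subseteq> span B"
        using y into span_superset by blast
      ultimately have "card (insert y (f ` B)) \<le> card B"
        using independent_span_bound[OF \<open>finite B\<close>] by blast
      then show False
        using \<open>y \<notin> f ` B\<close> \<open>finite B\<close> card_image by simp
    qed
  qed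
  then show ?thesis
    using into by (simp add: linear_span_image[OF lin] subset_antisym)
qed

lemma galerkin_ex1_if_unique:
  fixes B :: "'a::real_vector \<Rightarrow> 'a \<Rightarrow> real"
  assumes V: "subspace V" and W: "finite W" "V \<subseteq> span W"
    and lin_trial: "\<And>v. linear (\<lambda>u. B u v)" and lin_test: "\<And>u. linear (B u)"
    and lin_load: "linear f"
    and nondegenerate: "\<And>u. u \<in> V \<Longrightarrow> \<forall>v\<in>V. B u v = 0 \<Longrightarrow> u = 0"
  shows "\<exists>!u. u \<in> V \<and> (\<forall>v\<in>V. B u v = f v)"
proof -
  obtain Bs where Bs: "Bs \<subseteq> V" "independent Bs" "V \<subseteq> span Bs"
    by (rule basis_exists)
  have fin: "finite Bs"
    using independent_span_bound[OF W(1) Bs(2)] Bs(1) W(2) by (meson order_trans)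
  have span_Bs: "span Bs = V"
    using span_minimal[OF Bs(1) V] Bs(3) by (rule subset_antisym)
  \<comment> \<open>A collects the residuals of u against the basis; it maps V into itself and is
    injective by nondegeneracy, hence onto.\<close>
  define A where "A u = (\<Sum>b\<in>Bs. B u b *\<^sub>R b)" for u
  have "linear A"
    unfolding A_def
    by (intro linear_compose_sum ballI linearI)
       (simp_all add: linear_add[OF lin_trial] linear_scale[OF lin_trial] scaleR_add_left)
  have coordinates: "(\<forall>v\<in>V. B u v = g v) \<longleftrightarrow> A u = (\<Sum>b\<in>Bs. g b *\<^sub>R b)"
    if "linear g" for u g
  proof -
    have lin_diff: "linear (\<lambda>v. B u v - g v)"
      using lin_test[of u] that by (simp add: linear_iff algebra_simps)
    have "(\<forall>v\<in>V. B u v = g v) \<longleftrightarrow> (\<forall>b\<in>Bs. B u b = g b)"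
      using linear_eq_0_on_span[OF lin_diff] Bs(1) span_Bs by auto
    also have "\<dots> \<longleftrightarrow> (\<Sum>b\<in>Bs. (B u b - g b) *\<^sub>R b) = 0"
      using Bs(2) fin by (auto simp: dependent_finite dest!: spec[of _ "\<lambda>b. B u b - g b"])
    also have "\<dots> \<longleftrightarrow> A u = (\<Sum>b\<in>Bs. g b *\<^sub>R b)"
      by (simp add: A_def scaleR_diff_left sum_subtractf)
    finally show ?thesis .
  qed
  have in_V: "(\<Sum>b\<in>Bs. c b *\<^sub>R b) \<in> V" for c
    unfolding span_Bs[symmetric] by (intro span_sum span_scale span_base)
  have "inj_on A V"
    using coordinates[OF linear_zero] nondegenerate
    by (simp add: linear_inj_on_iff_eq_0[OF \<open>linear A\<close> V])
  moreover have "A ` V \<subseteq> V"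
    unfolding A_def using in_V by blast
  ultimately have "A ` V = V"
    using linear_inj_on_imp_surj_on_span[OF \<open>linear A\<close> fin Bs(2)] span_Bs by simp
  then obtain u where u: "u \<in> V" "A u = (\<Sum>b\<in>Bs. f b *\<^sub>R b)"
    using in_V by (metis imageE)
  show ?thesis
  proof (rule ex1I[of _ u])
    show "u \<in> V \<and> (\<forall>v\<in>V. B u v = f v)"
      using coordinates[OF lin_load] u by blast
  next
    fix u' assume u': "u' \<in> V \<and> (\<forall>v\<in>V. B u' v = f v)"
    then have "A u' = A u"
      using coordinates[OF lin_load] u by simp
    then show "u' = u"
      using inj_onD[OF \<open>inj_on A V\<close>] u u' by blast
  qed
qed

lemma linear_eq_on_Times_iff:
  assumes f: "linear f" and g: "linear g" and "0 \<in> A" "0 \<in> B"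
  shows "(\<forall>v\<in>A \<times> B. f v = g v) \<longleftrightarrow>
           (\<forall>a\<in>A. f (a, 0) = g (a, 0)) \<and> (\<forall>b\<in>B. f (0, b) = g (0, b))"
proof (intro iffI conjI ballI)
  fix v assume *: "(\<forall>a\<in>A. f (a, 0) = g (a, 0)) \<and> (\<forall>b\<in>B. f (0, b) = g (0, b))"
    and "v \<in> A \<times> B"
  then obtain a b where "a \<in> A" "b \<in> B" and v: "v = (a, 0) + (0, b)"
    by auto
  then show "f v = g v"
    using * unfolding v linear_add[OF f] linear_add[OF g] by simp
qed (use assms in auto)

lemma subspace_Xh_times_Kh: "subspace (Xh N \<times> Kh N)"
  by (auto simp: subspace_def Xh_def Kh_def Kh0_def zero_prod_def)

definition nodal :: "nat \<Rightarrow> nat \<Rightarrow> real" where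
  "nodal i j = (if j = i then 1 else 0)"

lemma sum_mult_nodal: "finite A \<Longrightarrow> (\<Sum>i\<in>A. c i * nodal i j) = (if j \<in> A then c j else 0)"
  by (simp add: nodal_def if_distrib[of "(*) _"] sum.delta cong: if_cong)

lemma Xh_times_Kh_subset_span:
  "Xh N \<times> Kh N \<subseteq>
     span (\<Union>i\<le>N. {((\<lambda>j. (nodal i j, 0)), 0), ((\<lambda>j. (0, nodal i j)), 0), (0, nodal i)})"
    (is "_ \<subseteq> span ?W")
proof
  fix u assume "u \<in> Xh N \<times> Kh N"
  then obtain X \<kappa> where u: "u = (X, \<kappa>)" and X: "X \<in> Xh N" and \<kappa>: "\<kappa> \<in> Kh N"
    by blast
  have "u = (\<Sum>i\<le>N. fst (X i) *\<^sub>R ((\<lambda>j. (nodal i j, 0)), 0)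
                   + snd (X i) *\<^sub>R ((\<lambda>j. (0, nodal i j)), 0) + \<kappa> i *\<^sub>R (0, nodal i))"
    using X \<kappa>
    by (auto simp: u Xh_def Kh_def Kh0_def fun_eq_iff prod_eq_iff fst_sum snd_sum
        sum_fun_apply sum.distrib sum_mult_nodal)
  also have "\<dots> \<in> span ?W"
    by (intro span_sum span_add span_scale span_base) auto
  finally show "u \<in> span ?W" .
qed

definition normal_pairing ::
  "nat \<Rightarrow> (nat \<Rightarrow> real \<times> real) \<Rightarrow> (nat \<Rightarrow> real) \<Rightarrow> (nat \<Rightarrow> real \<times> real) \<Rightarrow> real" where
  "normal_pairing N Y \<psi> \<omega> =
     ip_lump N Y (\<lambda>j i. \<psi> i * (nrm1 Y j * fst (\<omega> i) + nrm2 Y j * snd (\<omega> i)))"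

definition stiffness :: "nat \<Rightarrow> (nat \<Rightarrow> real \<times> real) \<Rightarrow> (nat \<Rightarrow> real) \<Rightarrow> (nat \<Rightarrow> real) \<Rightarrow> real" where
  "stiffness N Y f g = ip_pc N Y (ds N Y f) (ds N Y g)"

lemma stiffness_eq_sum:
  "stiffness N Y f g = (\<Sum>j=1..N. (f j - f (j - 1)) * (g j - g (j - 1)) / elen Y j)"
proof (cases "N = 0")
  case False
  have "sqrt ((drho N (\<lambda>i. fst (Y i)) j)\<^sup>2 + (drho N (\<lambda>i. snd (Y i)) j)\<^sup>2) = real N * elen Y j" for j
  proof -
    have "(drho N (\<lambda>i. fst (Y i)) j)\<^sup>2 + (drho N (\<lambda>i. snd (Y i)) j)\<^sup>2
          = (real N)\<^sup>2 * ((edge1 Y j)\<^sup>2 + (edge2 Y j)\<^sup>2)"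
      by (simp add: drho_def mesh_h_def edge1_def edge2_def power2_eq_square algebra_simps)
    then show ?thesis
      by (simp add: real_sqrt_mult elen_def)
  qed
  with False show ?thesis
    unfolding stiffness_def ip_pc_def
    by (intro sum.cong) (auto simp: ds_def drho_def mesh_h_def power2_eq_square)
qed (simp add: stiffness_def ip_pc_def)

lemma stiffness_bilinear:
  "stiffness N Y (\<lambda>i. f i + f' i) g = stiffness N Y f g + stiffness N Y f' g"
  "stiffness N Y (\<lambda>i. c * f i) g = c * stiffness N Y f g"
  "stiffness N Y f (\<lambda>i. g i + g' i) = stiffness N Y f g + stiffness N Y f g'"
  "stiffness N Y f (\<lambda>i. c * g i) = c * stiffness N Y f g"
  "stiffness N Y (\<lambda>i. 0) g = 0"
  "stiffness N Y f (\<lambda>i. 0) = 0"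
  unfolding stiffness_eq_sum sum.distrib[symmetric] sum_distrib_left
  by (auto intro!: sum.cong simp: algebra_simps add_divide_distrib diff_divide_distrib)

lemma normal_pairing_bilinear:
  "normal_pairing N Y (\<lambda>i. \<psi> i + \<psi>' i) \<omega> = normal_pairing N Y \<psi> \<omega> + normal_pairing N Y \<psi>' \<omega>"
  "normal_pairing N Y (\<lambda>i. c * \<psi> i) \<omega> = c * normal_pairing N Y \<psi> \<omega>"
  "normal_pairing N Y \<psi> (\<lambda>i. \<omega> i + \<omega>' i) = normal_pairing N Y \<psi> \<omega> + normal_pairing N Y \<psi> \<omega>'"
  "normal_pairing N Y \<psi> (\<lambda>i. c *\<^sub>R \<omega> i) = c * normal_pairing N Y \<psi> \<omega>"
  "normal_pairing N Y (\<lambda>i. 0) \<omega> = 0"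
  "normal_pairing N Y \<psi> (\<lambda>i. 0) = 0"
  by (simp_all add: normal_pairing_def ip_lump_def sum.distrib sum_distrib_left algebra_simps)

lemma stiffness_self_nonneg: "0 \<le> stiffness N Y f f"
  by (simp add: stiffness_eq_sum elen_def sum_nonneg)

lemma stiffness_self_eq_0_imp_const:
  assumes elen: "\<forall>j\<in>{1..N}. 0 < elen Y j" and "stiffness N Y f f = 0" and "j \<le> N"
  shows "f j = f 0"
proof -
  have "(f j - f (j - 1))\<^sup>2 / elen Y j = 0" if "j \<in> {1..N}" for j
    using \<open>stiffness N Y f f = 0\<close> that
    by (subst (asm) stiffness_eq_sum, subst (asm) sum_nonneg_eq_0_iff)
       (auto simp: elen_def power2_eq_square)
  then have step: "f j = f (j - 1)" if "j \<in> {1..N}" for j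
    using elen that by fastforce
  show ?thesis
    using \<open>j \<le> N\<close> by (induction j) (use step in auto)
qed

lemma normal_pairing_nodal_first:
  "1 \<le> N \<Longrightarrow> normal_pairing N Y \<kappa> (\<lambda>j. (nodal 0 j, 0)) = elen Y 1 * \<kappa> 0 * nrm1 Y 1 / 2"
  unfolding normal_pairing_def ip_lump_def
  by (subst sum.cong[OF refl, where h = "\<lambda>j. if j = 1 then elen Y 1 * \<kappa> 0 * nrm1 Y 1 else 0"])
     (auto simp: nodal_def)

lemma normal_pairing_nodal_last:
  "1 \<le> N \<Longrightarrow> normal_pairing N Y \<kappa> (\<lambda>j. (nodal N j, 0)) = elen Y N * \<kappa> N * nrm1 Y N / 2"
  unfolding normal_pairing_def ip_lump_def
  by (subst sum.cong[OF refl, where h = "\<lambda>j. if j = N then elen Y N * \<kappa> N * nrm1 Y N else 0"])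
     (auto simp: nodal_def)

type_synonym fe_pair = "(nat \<Rightarrow> real \<times> real) \<times> (nat \<Rightarrow> real)"

fun zjb_form ::
  "nat \<Rightarrow> (nat \<Rightarrow> real \<times> real) \<Rightarrow> real \<Rightarrow> real \<Rightarrow> real \<Rightarrow> fe_pair \<Rightarrow> fe_pair \<Rightarrow> real"
where
  "zjb_form N Y a tau eta (X, \<kappa>) (\<omega>, \<psi>) =
     a / tau * normal_pairing N Y \<psi> X + stiffness N Y \<kappa> \<psi>
     + normal_pairing N Y \<kappa> \<omega>
     - stiffness N Y (\<lambda>i. fst (X i)) (\<lambda>i. fst (\<omega> i))
     - stiffness N Y (\<lambda>i. snd (X i)) (\<lambda>i. snd (\<omega> i))
     - a / (eta * tau) * (fst (X 0) * fst (\<omega> 0) + fst (X N) * fst (\<omega> N))"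

fun zjb_load ::
  "nat \<Rightarrow> (nat \<Rightarrow> real \<times> real) \<Rightarrow> real \<Rightarrow> real \<Rightarrow> real \<Rightarrow> (nat \<Rightarrow> real \<times> real) \<Rightarrow>
   fe_pair \<Rightarrow> real"
where
  "zjb_load N Y tau eta sigma Xhat (\<omega>, \<psi>) =
     normal_pairing N Y \<psi> Xhat / tau - sigma * (fst (\<omega> N) - fst (\<omega> 0))
     - (fst (Xhat 0) * fst (\<omega> 0) + fst (Xhat N) * fst (\<omega> N)) / (eta * tau)"

lemmas fe_pair_algebra =
  plus_fun_def scaleR_fun_def normal_pairing_bilinear stiffness_bilinear add_divide_distrib

lemma linear_zjb_form_trial: "linear (\<lambda>u. zjb_form N Y a tau eta u v)"
  by (rule linearI; cases v; (simp only: split_paired_all)?; auto simp: fe_pair_algebra algebra_simps)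

lemma linear_zjb_form_test: "linear (zjb_form N Y a tau eta u)"
  by (rule linearI; cases u; (simp only: split_paired_all)?; auto simp: fe_pair_algebra algebra_simps)

lemma linear_zjb_load: "linear (zjb_load N Y tau eta sigma Xhat)"
  by (rule linearI; (simp only: split_paired_all)?; auto simp: fe_pair_algebra algebra_simps)

lemma zjb_residual_curvature:
  "ip_lump N Y (\<lambda>j i. ((a * fst (X i) - fst (Xhat i)) / tau * nrm1 Y j
                       + (a * snd (X i) - snd (Xhat i)) / tau * nrm2 Y j) * \<psi> i)
     + ip_pc N Y (ds N Y \<kappa>) (ds N Y \<psi>)
   = zjb_form N Y a tau eta (X, \<kappa>) (0, \<psi>) - zjb_load N Y tau eta sigma Xhat (0, \<psi>)"
proof -
  have "ip_lump N Y (\<lambda>j i. ((a * fst (X i) - fst (Xhat i)) / tau * nrm1 Y j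
                       + (a * snd (X i) - snd (Xhat i)) / tau * nrm2 Y j) * \<psi> i)
      = normal_pairing N Y \<psi> (\<lambda>i. (a / tau) *\<^sub>R X i + (- 1 / tau) *\<^sub>R Xhat i)"
    unfolding normal_pairing_def by (simp add: algebra_simps diff_divide_distrib)
  also have "\<dots> = a / tau * normal_pairing N Y \<psi> X - normal_pairing N Y \<psi> Xhat / tau"
    by (simp only: normal_pairing_bilinear) simp
  finally show ?thesis
    by (simp add: zero_fun_def normal_pairing_bilinear stiffness_bilinear stiffness_def)
qed

lemma zjb_residual_position:
  "ip_lump N Y (\<lambda>j i. \<kappa> i * (nrm1 Y j * fst (\<omega> i) + nrm2 Y j * snd (\<omega> i)))
     - (ip_pc N Y (ds N Y (\<lambda>i. fst (X i))) (ds N Y (\<lambda>i. fst (\<omega> i)))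
        + ip_pc N Y (ds N Y (\<lambda>i. snd (X i))) (ds N Y (\<lambda>i. snd (\<omega> i))))
     + sigma * (fst (\<omega> N) - fst (\<omega> 0))
     - 1 / (eta * tau) * ((a * fst (X 0) - fst (Xhat 0)) * fst (\<omega> 0)
                         + (a * fst (X N) - fst (Xhat N)) * fst (\<omega> N))
   = zjb_form N Y a tau eta (X, \<kappa>) (\<omega>, 0) - zjb_load N Y tau eta sigma Xhat (\<omega>, 0)"
  by (simp add: zero_fun_def normal_pairing_bilinear stiffness_bilinear normal_pairing_def
      stiffness_def algebra_simps diff_divide_distrib add_divide_distrib)

lemma bdf_zjb_eqs_iff_galerkin:
  "bdf_zjb_eqs N k tau eta sigma Xs Y X \<kappa> \<longleftrightarrow>
   (\<forall>v\<in>Xh N \<times> Kh N.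
      zjb_form N Y (bdf_a k) tau eta (X, \<kappa>) v = zjb_load N Y tau eta sigma (bdf_hat k Xs) v)"
proof -
  have "0 \<in> Xh N" "0 \<in> Kh N"
    by (simp_all add: Xh_def Kh_def Kh0_def)
  then show ?thesis
    unfolding linear_eq_on_Times_iff[OF linear_zjb_form_test linear_zjb_load \<open>0 \<in> Xh N\<close>
        \<open>0 \<in> Kh N\<close>]
      bdf_zjb_eqs_def Let_def zjb_residual_curvature[where eta = eta and sigma = sigma]
      zjb_residual_position
    by (simp add: conj_commute del: zjb_form.simps zjb_load.simps)
qed

lemma zjb_form_energy:
  "zjb_form N Y a tau eta (X, \<kappa>) (0, \<kappa>) = a / tau * normal_pairing N Y \<kappa> X + stiffness N Y \<kappa> \<kappa>"
  "zjb_form N Y a tau eta (X, \<kappa>) (X, 0) =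
     normal_pairing N Y \<kappa> X
     - (stiffness N Y (\<lambda>i. fst (X i)) (\<lambda>i. fst (X i)) + stiffness N Y (\<lambda>i. snd (X i)) (\<lambda>i. snd (X i)))
     - a / (eta * tau) * ((fst (X 0))\<^sup>2 + (fst (X N))\<^sup>2)"
  by (simp_all add: zero_fun_def normal_pairing_bilinear stiffness_bilinear power2_eq_square)

lemma zjb_form_kernel_position:
  assumes "0 < a" "0 < tau" "0 < eta" and elen: "\<forall>j\<in>{1..N}. 0 < elen Y j"
    and X: "X \<in> Xh N" and \<kappa>: "\<kappa> \<in> Kh N"
    and ker: "\<forall>v\<in>Xh N \<times> Kh N. zjb_form N Y a tau eta (X, \<kappa>) v = 0"
  shows "X = 0" and "\<forall>j\<le>N. \<kappa> j = \<kappa> 0"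
proof -
  have "0 \<in> Xh N" "0 \<in> Kh N"
    by (simp_all add: Xh_def Kh_def Kh0_def)
  define M where "M = normal_pairing N Y \<kappa> X"
  define Q where "Q = stiffness N Y (\<lambda>i. fst (X i)) (\<lambda>i. fst (X i))
                    + stiffness N Y (\<lambda>i. snd (X i)) (\<lambda>i. snd (X i))"
  define R where "R = a / (eta * tau) * ((fst (X 0))\<^sup>2 + (fst (X N))\<^sup>2)"
  have "zjb_form N Y a tau eta (X, \<kappa>) (0, \<kappa>) = 0" and "zjb_form N Y a tau eta (X, \<kappa>) (X, 0) = 0"
    using ker X \<kappa> \<open>0 \<in> Xh N\<close> \<open>0 \<in> Kh N\<close> by blast+
  then have "a / tau * M + stiffness N Y \<kappa> \<kappa> = 0" and "M - Q - R = 0"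
    by (simp_all only: zjb_form_energy M_def Q_def R_def)
  moreover have "0 \<le> R"
    using assms(1-3) by (simp add: R_def)
  moreover have "0 \<le> Q"
    using stiffness_self_nonneg[of N Y] by (simp add: Q_def add_nonneg_nonneg)
  ultimately have "0 \<le> a / tau * M"
    using assms(1,2) by simp
  then have "stiffness N Y \<kappa> \<kappa> = 0" and "a / tau * M = 0"
    using \<open>a / tau * M + stiffness N Y \<kappa> \<kappa> = 0\<close> stiffness_self_nonneg[of N Y \<kappa>]
    by linarith+
  then have "M = 0"
    using assms(1,2) by simp
  with \<open>stiffness N Y \<kappa> \<kappa> = 0\<close> show "\<forall>j\<le>N. \<kappa> j = \<kappa> 0"
    using stiffness_self_eq_0_imp_const[OF elen] by blast
  have "Q = 0" and "R = 0"
    using \<open>M - Q - R = 0\<close> \<open>M = 0\<close> \<open>0 \<le> Q\<close> \<open>0 \<le> R\<close> by linarith+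
  then have "stiffness N Y (\<lambda>i. fst (X i)) (\<lambda>i. fst (X i)) = 0"
    and "stiffness N Y (\<lambda>i. snd (X i)) (\<lambda>i. snd (X i)) = 0"
    using stiffness_self_nonneg[of N Y] unfolding Q_def by (simp_all add: add_nonneg_eq_0_iff)
  then have const: "fst (X j) = fst (X 0)" "snd (X j) = snd (X 0)" if "j \<le> N" for j
    using stiffness_self_eq_0_imp_const[OF elen] that by blast+
  have "fst (X 0) = 0"
    using \<open>R = 0\<close> assms(1-3) by (simp add: R_def add_nonneg_eq_0_iff)
  moreover have "snd (X 0) = 0" and outside: "\<forall>j>N. X j = 0"
    using X by (auto simp: Xh_def Kh_def Kh0_def prod_eq_iff)
  ultimately have "X j = 0" if "j \<le> N" for j
    using const[OF that] by (simp add: prod_eq_iff)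
  with outside show "X = 0"
    by (simp add: fun_eq_iff) (meson not_le)
qed

lemma zjb_form_kernel_trivial:
  assumes "1 \<le> N" "0 < a" "0 < tau" "0 < eta" and elen: "\<forall>j\<in>{1..N}. 0 < elen Y j"
    and normal: "(nrm1 Y 1)\<^sup>2 + (nrm1 Y N)\<^sup>2 > 0"
    and u: "u \<in> Xh N \<times> Kh N" and ker: "\<forall>v\<in>Xh N \<times> Kh N. zjb_form N Y a tau eta u v = 0"
  shows "u = 0"
proof -
  obtain X \<kappa> where u_eq: "u = (X, \<kappa>)" and X: "X \<in> Xh N" and \<kappa>: "\<kappa> \<in> Kh N"
    using u by blast
  note position = zjb_form_kernel_position[OF assms(2-4) elen X \<kappa> ker[unfolded u_eq]]
  have tested: "normal_pairing N Y \<kappa> (\<lambda>j. (nodal i j, 0)) = 0" if "i \<le> N" for i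
  proof -
    have "(\<lambda>j. (nodal i j, 0), 0) \<in> Xh N \<times> Kh N"
      using that by (simp add: Xh_def Kh_def Kh0_def nodal_def)
    then have "zjb_form N Y a tau eta (0, \<kappa>) (\<lambda>j. (nodal i j, 0), 0) = 0"
      using ker u_eq position(1) by blast
    then show ?thesis
      by (simp add: zero_fun_def normal_pairing_bilinear stiffness_bilinear)
  qed
  have "elen Y 1 * \<kappa> 0 * nrm1 Y 1 = 0"
    using tested[of 0] normal_pairing_nodal_first[OF \<open>1 \<le> N\<close>] by simp
  moreover have "elen Y N * \<kappa> 0 * nrm1 Y N = 0"
    using tested[of N] normal_pairing_nodal_last[OF \<open>1 \<le> N\<close>] position(2)[rule_format, of N]
    by simp
  moreover have "0 < elen Y 1" "0 < elen Y N"
    using elen \<open>1 \<le> N\<close> by auto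
  ultimately have "\<kappa> 0 = 0"
    using normal by auto
  have "\<kappa> j = 0" for j
  proof (cases "j \<le> N")
    case True
    then show ?thesis
      using position(2) \<open>\<kappa> 0 = 0\<close> by metis
  next
    case False
    then show ?thesis
      using \<kappa> by (simp add: Kh_def)
  qed
  then show "u = 0"
    using u_eq position(1) by (simp add: zero_prod_def zero_fun_def fun_eq_iff)
qed

theorem theorem3p2:
  fixes N k :: nat and tau eta sigma :: real
    and Xs :: "nat \<Rightarrow> nat \<Rightarrow> real \<times> real"
    and Xt :: "nat \<Rightarrow> real \<times> real"
  assumes "N \<ge> 3" and "tau > 0" and "eta > 0" and "k \<in> {2, 3, 4}"
    and "\<forall>p<k. Xs p \<in> Xh N"
    and "Xt \<in> Xh N"
    and "(nrm1 Xt 1)\<^sup>2 + (nrm1 Xt N)\<^sup>2 > 0"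
    and "Min ((\<lambda>j. elen Xt j) ` {1..N}) > 0"
  shows "\<exists>!(X, kappa). X \<in> Xh N \<and> kappa \<in> Kh N \<and>
           bdf_zjb_eqs N k tau eta sigma Xs Xt X kappa"
proof -
  have "1 \<le> N" and "0 < bdf_a k"
    using assms(1) by (simp_all add: bdf_a_def)
  have elen: "\<forall>j\<in>{1..N}. 0 < elen Xt j"
    using assms(8) \<open>1 \<le> N\<close> by (subst (asm) Min_gr_iff) auto
  have "\<exists>!u. u \<in> Xh N \<times> Kh N \<and>
          (\<forall>v\<in>Xh N \<times> Kh N. zjb_form N Xt (bdf_a k) tau eta u v
                               = zjb_load N Xt tau eta sigma (bdf_hat k Xs) v)"
    by (rule galerkin_ex1_if_unique[OF subspace_Xh_times_Kh _ Xh_times_Kh_subset_span linear_zjb_form_trial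
          linear_zjb_form_test linear_zjb_load])
       (simp_all add: zjb_form_kernel_trivial[OF \<open>1 \<le> N\<close> \<open>0 < bdf_a k\<close> assms(2,3) elen
          assms(7)])
  then show ?thesis
    by (simp add: bdf_zjb_eqs_iff_galerkin split_def mem_Times_iff
        del: zjb_form.simps zjb_load.simps)
qed

end
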